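(* Consider the approximate power-flow model $\mathbf{q}=\operatorname{diag}(\mathbf{v})\mathbf{B}\mathbf{v}$, partitioned into generator (G) and load (L) buses as $$\begin{bmatrix}\mathbf{q}_G\\ \mathbf{q}_L\end{bmatrix}=\begin{bmatrix}\operatorname{diag}(\mathbf{v}_G)&\mathbf{0}\\ \mathbf{0}&\operatorname{diag}(\mathbf{v}_L)\end{bmatrix}\begin{bmatrix}\mathbf{B}_{GG}&\mathbf{B}_{LG}^\top\\ \mathbf{B}_{LG}&\mathbf{B}_{LL}\end{bmatrix}\begin{bmatrix}\mathbf{v}_G\\ \mathbf{v}_L\end{bmatrix}.$$ For control input $\mathbf{u}=[\mathbf{q}_L^\top~~\mathbf{v}_G^\top]^\top$ and output $\mathbf{y}=\mathbf{v}_L$, the mapping $\mathbf{y}=\mathrm{F}(\mathbf{u})$ implicitly defined by this model satisfies $\nabla_{\mathbf{u}}\mathrm{F}(\mathbf{u})\geq\mathbf{0}$ (entrywise) if $\operatorname{diag}(\mathbf{g}_L)+\mathbf{B}_{LL}\succ 0$, where $\mathbf{g}_L:=[\operatorname{diag}(\mathbf{v}_L)]^{-2}\mathbf{q}_L$.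
   Context: An electric power network is modeled by a graph $\mathcal{G}=(\mathcal{N},\mathcal{E})$ with edges being transmission lines; buses are partitioned into generator (PV) buses $\mathcal{N}_G$ and load (PQ) buses $\mathcal{N}_L$. $v_n$ and $q_n$ denote voltage magnitude and reactive power injection at bus $n$; vectors $\mathbf{v},\mathbf{q}$ stack them, with subscripts $G$, $L$ denoting the generator and load sub-vectors. $\mathbf{B}\in\mathbb{R}^{N\times N}$ is a weighted Laplacian of $\mathcal{G}$: $B_{mn}<0$ equals the negative susceptance of line $(m,n)\in\mathcal{E}$, $B_{mn}=0$ if $(m,n)\notin\mathcal{E}$, and $B_{mm}=-\sum_{n\neq m}B_{mn}>0$; it is partitioned into blocks $\mathbf{B}_{GG},\mathbf{B}_{LG},\mathbf{B}_{LL}$ accordingly. Voltages are positive, $\mathbf{v}_L>\mathbf{0}$. The symbol $\succ 0$ for a matrix means all its eigenvalues are real and positive. Inequalities between vectors/matrices are entrywise. *)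

theory Defs
  imports "HOL-Analysis.Analysis"
begin

definition weighted_laplacian :: "real^'n^'n \<Rightarrow> bool" where
  "weighted_laplacian B \<longleftrightarrow>
     (\<forall>m n. B $ m $ n = B $ n $ m) \<and>
     (\<forall>m n. m \<noteq> n \<longrightarrow> B $ m $ n \<le> 0) \<and>
     (\<forall>m. B $ m $ m = - (\<Sum>n\<in>UNIV - {m}. B $ m $ n))"

text \<open>M \<succ> 0: every (complex) eigenvalue of M is real and positive.\<close>
definition eig_pos :: "real^'n^'n \<Rightarrow> bool" where
  "eig_pos M \<longleftrightarrow>
     (\<forall>(c::complex) (x::complex^'n). x \<noteq> 0 \<and>
        (\<chi> i j. complex_of_real (M $ i $ j)) *v x = c *s x \<longrightarrow>
        c \<in> \<real> \<and> Re c > 0)"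

definition diagm :: "real^'n \<Rightarrow> real^'n^'n" where
  "diagm d = (\<chi> i j. if i = j then d $ i else 0)"

text \<open>Blocks of B indexed by 'g + 'l (Inl = generator buses, Inr = load buses).\<close>
definition blk_LL :: "real^('g::finite+'l::finite)^('g+'l) \<Rightarrow> real^'l^'l" where
  "blk_LL B = (\<chi> i j. B $ Inr i $ Inr j)"

definition blk_LG :: "real^('g::finite+'l::finite)^('g+'l) \<Rightarrow> real^'g^'l" where
  "blk_LG B = (\<chi> i j. B $ Inr i $ Inl j)"

text \<open>Control input u = [q_L; v_G], indexed by 'l + 'g.\<close>
definition qL_of :: "real^('l::finite+'g::finite) \<Rightarrow> real^'l" where
  "qL_of u = (\<chi> i. u $ Inl i)"

definition vG_of :: "real^('l::finite+'g::finite) \<Rightarrow> real^'g" where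
  "vG_of u = (\<chi> j. u $ Inr j)"

end

theory Submission
  imports Defs
begin

text \<open>Differentiating the model \<open>q_L = diag(v_L) (B_LG v_G + B_LL v_L)\<close> in a direction
  \<open>h \<ge> 0\<close> of the input and dividing by \<open>v_L\<close> shows that the directional derivative
  \<open>x\<close> of \<open>v_L = F u\<close> satisfies \<open>(diag(g_L) + B_LL) x = diag(v_L)^-1 dq_L - B_LG dv_G \<ge> 0\<close>,
  because the block \<open>B_LG\<close> is nonpositive. The matrix \<open>M = diag(g_L) + B_LL\<close> has nonpositive
  off-diagonal entries and positive eigenvalues, i.e. it is a nonsingular M-matrix, and such a
  matrix is inverse-nonnegative as soon as \<open>M z > 0\<close> for some \<open>z > 0\<close>. Such a \<open>z\<close> is found
  by continuation along \<open>M + t I\<close>: for large \<open>t\<close> take \<open>z = 1\<close>; the set of good \<open>t \<ge> 0\<close> is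
  open, and it is closed from above because \<open>M + t I\<close> stays nonsingular, so it contains 0.\<close>

definition Z_matrix :: "real^'n^'n \<Rightarrow> bool" where
  "Z_matrix M \<longleftrightarrow> (\<forall>i j. i \<noteq> j \<longrightarrow> M $ i $ j \<le> 0)"

definition semipositive :: "real^'n^'n \<Rightarrow> bool" where
  "semipositive M \<longleftrightarrow> (\<exists>z. (\<forall>i. 0 < z $ i) \<and> (\<forall>i. 0 < (M *v z) $ i))"

lemma Z_matrix_semipositive_inverse_nonneg:
  assumes Z: "Z_matrix M" and "semipositive M" and Mx: "0 \<le> M *v x"
  shows "0 \<le> x"
proof (rule ccontr)
  obtain z where z_pos: "\<And>i. 0 < z $ i" and Mz_pos: "\<And>i. 0 < (M *v z) $ i"
    using \<open>semipositive M\<close> unfolding semipositive_def by blast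
  define c where "c = (\<lambda>i. x $ i / z $ i)"
  define i0 where "i0 = arg_min_on c UNIV"
  have c_min: "c i0 \<le> c i" for i
    unfolding i0_def by (rule arg_min_least) simp_all
  assume "\<not> 0 \<le> x"
  then obtain k where "x $ k < 0" by (auto simp: less_eq_vec_def not_le)
  then have c_neg: "c i0 < 0"
    using c_min[of k] z_pos[of k] by (simp add: c_def divide_neg_pos order.strict_trans1)
  define y where "y = x - c i0 *\<^sub>R z"
  have y_nonneg: "0 \<le> y $ j" for j
  proof -
    have "c i0 * z $ j \<le> x $ j"
      using c_min[of j] z_pos[of j] by (simp add: c_def pos_le_divide_eq)
    then show ?thesis by (simp add: y_def)
  qed
  have y_i0: "y $ i0 = 0"
    using z_pos[of i0] by (simp add: y_def c_def)
  have "(M *v y) $ i0 \<le> 0"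
    unfolding matrix_vector_mult_def vec_lambda_beta
  proof (intro sum_nonpos)
    show "M $ i0 $ j * y $ j \<le> 0" for j
      using Z y_nonneg[of j] y_i0 unfolding Z_matrix_def
      by (cases "j = i0") (simp_all add: mult_nonpos_nonneg)
  qed
  moreover have "(M *v y) $ i0 = (M *v x) $ i0 - c i0 * (M *v z) $ i0"
    by (simp add: y_def matrix_vector_mult_diff_distrib matrix_vector_mult_scaleR)
  moreover have "0 \<le> (M *v x) $ i0"
    using Mx by (simp add: less_eq_vec_def)
  ultimately show False
    using mult_neg_pos[OF c_neg Mz_pos[of i0]] by linarith
qed

lemma Z_matrix_row_le_diagonal:
  assumes "Z_matrix A"  and "0 \<le> x"
  shows "(A *v x) $ i \<le> A $ i $ i * x $ i"
proof -
  have "A $ i $ j * x $ j \<le> 0" if "j \<noteq> i" for j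
    using assms that by (simp add: Z_matrix_def less_eq_vec_def mult_nonpos_nonneg)
  then have "(\<Sum>j\<in>UNIV - {i}. A $ i $ j * x $ j) \<le> 0"
    by (intro sum_nonpos) simp
  then show ?thesis
    by (simp add: matrix_vector_mult_def sum.remove[of UNIV i])
qed

lemma shift_matrix_vector_mult [simp]:
  "(M + t *\<^sub>R mat 1) *v x = M *v x + t *\<^sub>R (x :: real^'n)"
  by (simp add: matrix_vector_mult_add_rdistrib flip: scaleR_matrix_vector_assoc)

lemma Z_matrix_shift [simp]: "Z_matrix (M + t *\<^sub>R mat 1) \<longleftrightarrow> Z_matrix M"
  by (simp add: Z_matrix_def mat_def)

lemma semipositive_shift_mono:
  assumes "semipositive (M + s *\<^sub>R mat 1)" and "s \<le> t"
  shows "semipositive (M + t *\<^sub>R mat 1)"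
proof -
  obtain z where z_pos: "\<And>i. 0 < z $ i" and Az_pos: "\<And>i. 0 < (M *v z) $ i + s * z $ i"
    using assms(1) unfolding semipositive_def by auto
  have "0 < (M *v z) $ i + t * z $ i" for i
    using Az_pos[of i] mult_right_mono[OF \<open>s \<le> t\<close> less_imp_le[OF z_pos[of i]]] by linarith
  then show ?thesis
    unfolding semipositive_def using z_pos by auto
qed

lemma semipositive_shift_large:
  fixes M :: "real^'n^'n"
  shows "\<exists>t. semipositive (M + t *\<^sub>R mat 1)"
proof -
  have "0 < (M *v 1) $ i + (norm (M *v 1) + 1)" for i
    using component_le_norm_cart[of "M *v 1" i] by linarith
  then have "semipositive (M + (norm (M *v 1) + 1) *\<^sub>R mat 1)"
    unfolding semipositive_def by (intro exI[of _ 1]) simp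
  then show ?thesis ..
qed

lemma semipositive_shift_decrease:
  assumes "semipositive (M + t *\<^sub>R mat 1)"
  shows "\<exists>t' < t. semipositive (M + t' *\<^sub>R mat 1)"
proof -
  obtain z where z_pos: "\<And>i. 0 < z $ i" and Az_pos: "\<And>i. 0 < ((M + t *\<^sub>R mat 1) *v z) $ i"
    using assms unfolding semipositive_def by blast
  define r where "r i = ((M + t *\<^sub>R mat 1) *v z) $ i / z $ i" for i
  define d where "d = Min (range r)"
  have d_pos: "0 < d"
    unfolding d_def r_def using z_pos Az_pos by (simp add: Min_gr_iff)
  have dz_le: "d * z $ i \<le> ((M + t *\<^sub>R mat 1) *v z) $ i" for i
  proof -
    have "d \<le> r i"
      unfolding d_def by (rule Min_le) simp_all
    then show ?thesis
      using z_pos[of i] by (simp add: r_def pos_le_divide_eq del: shift_matrix_vector_mult)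
  qed
  have "0 < ((M + (t - d / 2) *\<^sub>R mat 1) *v z) $ i" for i
    using dz_le[of i] mult_pos_pos[OF d_pos z_pos[of i]] by (simp add: left_diff_distrib)
  then have "semipositive (M + (t - d / 2) *\<^sub>R mat 1)"
    unfolding semipositive_def using z_pos by blast
  then show ?thesis
    using d_pos by (intro exI[of _ "t - d / 2"]) simp
qed

lemma Z_matrix_semipositive_shift_limit:
  assumes Z: "Z_matrix M" and "surj ((*v) (M + t *\<^sub>R mat 1))"
    and above: "\<And>s. t < s \<Longrightarrow> semipositive (M + s *\<^sub>R mat 1)"
  shows "semipositive (M + t *\<^sub>R mat 1)"
proof -
  obtain x where x: "(M + t *\<^sub>R mat 1) *v x = 1"
    using \<open>surj _\<close> by (metis surjD)
  have x_i: "(M *v x) $ i + t * x $ i = 1" for i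
  proof -
    have "((M + t *\<^sub>R mat 1) *v x) $ i = 1"
      by (simp only: x one_index)
    then show ?thesis by simp
  qed
  define e where "e = 1 / (norm x + 1)"
  have "0 < e"
    by (simp add: e_def add_nonneg_pos)
  have "0 \<le> (M + (t + e) *\<^sub>R mat 1) *v x"
  proof -
    have bound: "0 \<le> 1 + e * x $ i" for i
    proof -
      have "\<bar>e * x $ i\<bar> \<le> 1"
        using component_le_norm_cart[of x i] \<open>0 < e\<close>
        by (simp add: e_def abs_mult divide_le_eq)
      then show ?thesis
        by (simp add: abs_le_iff)
    qed
    have "0 \<le> ((M + (t + e) *\<^sub>R mat 1) *v x) $ i" for i
      using bound[of i] x_i[of i] by (simp add: distrib_right)
    then show ?thesis
      unfolding less_eq_vec_def zero_index by blast
  qed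
  then have x_nonneg: "0 \<le> x"
    by (rule Z_matrix_semipositive_inverse_nonneg[rotated 2]) (simp_all add: Z above \<open>0 < e\<close>)
  have "0 < x $ i" for i
  proof -
    have "((M + t *\<^sub>R mat 1) *v x) $ i \<le> (M + t *\<^sub>R mat 1) $ i $ i * x $ i"
      using Z x_nonneg by (intro Z_matrix_row_le_diagonal) simp_all
    then have "x $ i \<noteq> 0"
      using x_i[of i] by auto
    then show ?thesis
      using x_nonneg by (simp add: less_eq_vec_def order_less_le)
  qed
  then show ?thesis
    unfolding semipositive_def using x_i by (intro exI[of _ x]) simp
qed

lemma eig_pos_real_eigenvalue_pos:
  assumes "eig_pos M" and "x \<noteq> 0" and "M *v x = c *\<^sub>R x"
  shows "0 < c"
proof -
  define xc where "xc = (\<chi> i. complex_of_real (x $ i))"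
  have "xc \<noteq> 0"
    using \<open>x \<noteq> 0\<close> by (auto simp: xc_def vec_eq_iff)
  moreover have "(\<chi> i j. complex_of_real (M $ i $ j)) *v xc = complex_of_real c *s xc"
    using \<open>M *v x = c *\<^sub>R x\<close>
    by (simp add: xc_def vec_eq_iff matrix_vector_mult_def flip: of_real_mult of_real_sum)
  ultimately show ?thesis
    using \<open>eig_pos M\<close> unfolding eig_pos_def by fastforce
qed

lemma eig_pos_shift_surj:
  assumes "eig_pos M" and "0 \<le> t"
  shows "surj ((*v) (M + t *\<^sub>R mat 1))"
proof -
  have "x = 0" if "(M + t *\<^sub>R mat 1) *v x = 0" for x
  proof (rule ccontr)
    assume "x \<noteq> 0"
    moreover have "M *v x = (- t) *\<^sub>R x"
      using that by (simp add: eq_neg_iff_add_eq_0)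
    ultimately show False
      using eig_pos_real_eigenvalue_pos[OF \<open>eig_pos M\<close>] \<open>0 \<le> t\<close> by fastforce
  qed
  then show ?thesis
    using linear_injective_imp_surjective[OF matrix_vector_mul_linear]
      linear_injective_0[OF matrix_vector_mul_linear] by blast
qed

lemma Z_matrix_eig_pos_semipositive:
  assumes Z: "Z_matrix M" and E: "eig_pos M"
  shows "semipositive M"
proof -
  define S where "S = {t. 0 \<le> t \<and> semipositive (M + t *\<^sub>R mat 1)}"
  define t0 where "t0 = Inf S"
  have in_S: "max 0 t \<in> S" if "semipositive (M + t *\<^sub>R mat 1)" for t
    using semipositive_shift_mono[OF that] by (simp add: S_def)
  have bdd: "bdd_below S"
    by (rule bdd_belowI[of _ 0]) (simp add: S_def)
  obtain t1 where "semipositive (M + t1 *\<^sub>R mat 1)"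
    using semipositive_shift_large by blast
  then have "S \<noteq> {}"
    using in_S by blast
  then have "0 \<le> t0"
    unfolding t0_def by (rule cInf_greatest) (simp add: S_def)
  have t0_semipos: "semipositive (M + t0 *\<^sub>R mat 1)"
  proof (rule Z_matrix_semipositive_shift_limit[OF Z eig_pos_shift_surj[OF E \<open>0 \<le> t0\<close>]])
    fix s
    assume "t0 < s"
    then obtain r where "r \<in> S" "r < s"
      using cInf_less_iff[OF \<open>S \<noteq> {}\<close> bdd] by (auto simp: t0_def)
    then show "semipositive (M + s *\<^sub>R mat 1)"
      unfolding S_def using semipositive_shift_mono[of M r s] by simp
  qed
  obtain t' where "t' < t0" and t'_semipos: "semipositive (M + t' *\<^sub>R mat 1)"
    using semipositive_shift_decrease[OF t0_semipos] by blast
  have "t0 \<le> max 0 t'"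
    unfolding t0_def by (rule cInf_lower[OF in_S[OF t'_semipos] bdd])
  with \<open>t' < t0\<close> \<open>0 \<le> t0\<close> have "t0 = 0"
    by linarith
  with t0_semipos show ?thesis
    by simp
qed

corollary Z_matrix_eig_pos_inverse_nonneg:
  assumes "Z_matrix M" and "eig_pos M" and "0 \<le> M *v x"
  shows "0 \<le> x"
  using Z_matrix_semipositive_inverse_nonneg Z_matrix_eig_pos_semipositive assms by blast

lemma Z_matrix_diagm_add: "Z_matrix M \<Longrightarrow> Z_matrix (diagm d + M)"
  by (simp add: Z_matrix_def diagm_def)

lemma weighted_laplacian_offdiag_nonpos: "weighted_laplacian B \<Longrightarrow> m \<noteq> n \<Longrightarrow> B $ m $ n \<le> 0"
  by (simp add: weighted_laplacian_def)

lemma weighted_laplacian_Z_matrix_blk_LL: "weighted_laplacian B \<Longrightarrow> Z_matrix (blk_LL B)"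
  by (simp add: Z_matrix_def blk_LL_def weighted_laplacian_offdiag_nonpos)

lemma diagm_mult_vec [simp]: "diagm d *v x = d * x"
  by (simp add: vec_eq_iff diagm_def matrix_vector_mult_def if_distrib[of "\<lambda>a. a * _"] cong: if_cong)

lemma bounded_bilinear_vec_mult: "bounded_bilinear ((*) :: real^'n \<Rightarrow> real^'n \<Rightarrow> real^'n)"
  using bilinear_times bilinear_conv_bounded_bilinear by blast

lemma bounded_linear_qL_of: "bounded_linear qL_of"
  unfolding linear_conv_bounded_linear[symmetric]
  by (rule linearI) (simp_all add: qL_of_def vec_eq_iff)

lemma bounded_linear_vG_of: "bounded_linear vG_of"
  unfolding linear_conv_bounded_linear[symmetric]
  by (rule linearI) (simp_all add: vG_of_def vec_eq_iff)

lemma power_flow_linearization: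
  fixes B :: "real^('g::finite + 'l::finite)^('g + 'l)"
    and F :: "real^('l + 'g) \<Rightarrow> real^'l"
  assumes "open U" and "u0 \<in> U"
    and model: "\<And>u. u \<in> U \<Longrightarrow> qL_of u = F u * (blk_LG B *v vG_of u + blk_LL B *v F u)"
    and F': "(F has_derivative (*v) J) (at u0)"
  shows "qL_of h = F u0 * (blk_LG B *v vG_of h + blk_LL B *v (J *v h))
                   + (J *v h) * (blk_LG B *v vG_of u0 + blk_LL B *v F u0)"
proof -
  have "((\<lambda>u. blk_LG B *v vG_of u + blk_LL B *v F u) has_derivative
          (\<lambda>h. blk_LG B *v vG_of h + blk_LL B *v (J *v h))) (at u0)"
    by (intro has_derivative_add
        bounded_linear.has_derivative[OF matrix_vector_mul_bounded_linear F']
        bounded_linear.has_derivative[OF matrix_vector_mul_bounded_linear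
          bounded_linear_imp_has_derivative[OF bounded_linear_vG_of]])
  from bounded_bilinear.FDERIV[OF bounded_bilinear_vec_mult F' this]
  have "((\<lambda>u. F u * (blk_LG B *v vG_of u + blk_LL B *v F u)) has_derivative
          (\<lambda>h. F u0 * (blk_LG B *v vG_of h + blk_LL B *v (J *v h))
               + (J *v h) * (blk_LG B *v vG_of u0 + blk_LL B *v F u0))) (at u0)" .
  then have "(qL_of has_derivative
          (\<lambda>h. F u0 * (blk_LG B *v vG_of h + blk_LL B *v (J *v h))
               + (J *v h) * (blk_LG B *v vG_of u0 + blk_LL B *v F u0))) (at u0)"
    by (rule has_derivative_transform_within_open[OF _ \<open>open U\<close> \<open>u0 \<in> U\<close>])
      (simp add: model)
  from has_derivative_unique[OF bounded_linear_imp_has_derivative[OF bounded_linear_qL_of] this]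
  show ?thesis
    by (simp add: fun_eq_iff)
qed

lemma power_flow_sensitivity_identity:
  assumes v_pos: "\<And>i. 0 < v $ i" and q: "q = v * w"
    and dq: "dq = v * (G *v dg + L *v x) + x * w"
  shows "(diagm (\<chi> i. q $ i / (v $ i)^2) + L) *v x = (\<chi> i. dq $ i / v $ i) - G *v dg"
proof -
  have "q $ i / (v $ i)^2 * x $ i + (L *v x) $ i = dq $ i / v $ i - (G *v dg) $ i" for i
    using v_pos[of i] by (simp add: q dq field_simps power2_eq_square)
  then show ?thesis
    by (simp add: vec_eq_iff matrix_vector_mult_add_rdistrib)
qed

theorem proposition1:
  fixes B :: "real^('g::finite + 'l::finite)^('g + 'l)"
    and F :: "real^('l + 'g) \<Rightarrow> real^'l"
    and U :: "(real^('l + 'g)) set"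
    and u0 :: "real^('l + 'g)"
  assumes lap: "weighted_laplacian B"
    and U_open: "open U" and u0U: "u0 \<in> U"
    and pos: "\<forall>u\<in>U. \<forall>i. F u $ i > 0"
    and model: "\<forall>u\<in>U. qL_of u =
                   diagm (F u) *v (blk_LG B *v vG_of u + blk_LL B *v F u)"
    and diff: "F differentiable (at u0)"
    and cond: "eig_pos (diagm (\<chi> i. qL_of u0 $ i / (F u0 $ i)^2) + blk_LL B)"
  shows "\<forall>i j. jacobian F (at u0) $ i $ j \<ge> 0"
proof (intro allI)
  fix i k
  define M where "M = diagm (\<chi> i. qL_of u0 $ i / (F u0 $ i)^2) + blk_LL B"
  define J where "J = jacobian F (at u0)"
  define h :: "real^('l + 'g)" where "h = axis k 1"
  define x where "x = J *v h"
  have "(F has_derivative (*v) J) (at u0)"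
    using diff jacobian_works unfolding J_def by blast
  with model U_open u0U have "qL_of h = F u0 * (blk_LG B *v vG_of h + blk_LL B *v x)
                   + x * (blk_LG B *v vG_of u0 + blk_LL B *v F u0)"
    unfolding x_def by (intro power_flow_linearization) auto
  with pos u0U model have "M *v x = (\<chi> i. qL_of h $ i / F u0 $ i) - blk_LG B *v vG_of h"
    unfolding M_def by (intro power_flow_sensitivity_identity) simp_all
  moreover have "0 \<le> qL_of h $ j / F u0 $ j" for j
    using pos u0U by (simp add: h_def qL_of_def axis_def less_imp_le)
  moreover have "(blk_LG B *v vG_of h) $ j \<le> 0" for j
    unfolding matrix_vector_mult_def
    by (auto simp: blk_LG_def vG_of_def h_def axis_def
        intro!: sum_nonpos weighted_laplacian_offdiag_nonpos[OF lap])
  ultimately have "0 \<le> M *v x"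
    unfolding less_eq_vec_def using order.trans by fastforce
  moreover have "Z_matrix M"
    unfolding M_def by (intro Z_matrix_diagm_add weighted_laplacian_Z_matrix_blk_LL lap)
  ultimately have "0 \<le> x"
    using Z_matrix_eig_pos_inverse_nonneg cond unfolding M_def by blast
  then show "0 \<le> J $ i $ k"
    by (simp add: x_def h_def matrix_vector_mult_basis column_def less_eq_vec_def)
qed

end
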